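(* Consider the deterministic one-dimensional state equation $\dot X(s)=s\,u_1(s)+u_2(s)$, $s\in[0,1]$, $X(0)=x$, with controls $u_1,u_2\in L^2(0,1;\mathbb R)$, and the functional $J(x;u_1,u_2)=-|X(1)|^2+\int_0^1 s^2|u_1(s)|^2ds$. Then: (i) $J(0;u_1,0)\ge0$ for all $u_1$ and $J(0;0,u_2)\le0$ for all $u_2$; (ii) $(u_1,u_2)=(0,-1)$ is an open-loop saddle point of the game (Player 1 minimizing, Player 2 maximizing $J$) for $x=1$; (iii) for every $\varepsilon>0$, the game with functional $J_\varepsilon(x;u_1,u_2)=J(x;u_1,u_2)-\varepsilon\int_0^1|u_2(s)|^2ds$ (same state equation) has no open-loop saddle point for $x=1$.
   Context: An open-loop saddle point for initial state $x$ of a game with functional $\mathcal J$ is a pair $(u_1^*,u_2^* )$ with $\mathcal J(x;u_1^*,u_2)\le\mathcal J(x;u_1^*,u_2^* )\le\mathcal J(x;u_1,u_2^* )$ for all admissible $(u_1,u_2)$; here the admissible controls of both players are all real square-integrable functions on $[0,1]$. *)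

theory Defs
  imports "HOL-Analysis.Analysis"
begin

text \<open>Admissible controls: real square-integrable functions on [0,1]
  (values outside [0,1] are irrelevant).\<close>
definition L2adm :: "(real \<Rightarrow> real) \<Rightarrow> bool" where
  "L2adm u \<longleftrightarrow> u \<in> borel_measurable (lebesgue_on {0..1})
      \<and> integrable (lebesgue_on {0..1}) (\<lambda>s. (u s)^2)"

text \<open>Solution of the state equation X'(s) = s u1(s) + u2(s), X(0) = x.\<close>
definition Xstate :: "real \<Rightarrow> (real \<Rightarrow> real) \<Rightarrow> (real \<Rightarrow> real) \<Rightarrow> real \<Rightarrow> real" where
  "Xstate x u1 u2 t = x + integral\<^sup>L (lebesgue_on {0..t}) (\<lambda>s. s * u1 s + u2 s)"

definition Jfun :: "real \<Rightarrow> (real \<Rightarrow> real) \<Rightarrow> (real \<Rightarrow> real) \<Rightarrow> real" where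
  "Jfun x u1 u2 = - (\<bar>Xstate x u1 u2 1\<bar>^2)
      + integral\<^sup>L (lebesgue_on {0..1}) (\<lambda>s. s^2 * \<bar>u1 s\<bar>^2)"

definition Jeps :: "real \<Rightarrow> real \<Rightarrow> (real \<Rightarrow> real) \<Rightarrow> (real \<Rightarrow> real) \<Rightarrow> real" where
  "Jeps \<epsilon> x u1 u2 = Jfun x u1 u2 - \<epsilon> * integral\<^sup>L (lebesgue_on {0..1}) (\<lambda>s. \<bar>u2 s\<bar>^2)"

definition open_loop_saddle ::
  "(real \<Rightarrow> (real \<Rightarrow> real) \<Rightarrow> (real \<Rightarrow> real) \<Rightarrow> real) \<Rightarrow> real
     \<Rightarrow> (real \<Rightarrow> real) \<Rightarrow> (real \<Rightarrow> real) \<Rightarrow> bool" where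
  "open_loop_saddle J x a b \<longleftrightarrow> L2adm a \<and> L2adm b \<and>
     (\<forall>u1 u2. L2adm u1 \<and> L2adm u2 \<longrightarrow> J x a u2 \<le> J x a b \<and> J x a b \<le> J x u1 b)"

end

(*
  Writing J for the functional at x = 1 and using that [0,1] carries a probability measure,
  J(u1,u2) = -(1 + E[s u1] + E[u2])^2 + E[(s u1)^2] (- eps E[u2^2]), so (i) and (ii) come from
  the Cauchy-Schwarz inequality E[f]^2 <= E[f^2].

  For (iii), let (a,b) be a saddle point.  If 1 + E[b] = K were nonzero, Player 1 could play
  u(s) = K/(d s) on [d,1], making J(u,b) = -K^2/d - eps E[b^2] arbitrarily small.  With K = 0 his best
  cost is 0 (attained by u1 = 0), so a must give equality in Cauchy-Schwarz: s a(s) is a.e.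
  the constant E[s a]; since 1/s is not square integrable near 0, that constant is 0.  But then
  Player 2, bound to a control of mean -1 and paying eps E[b^2] >= eps, strictly gains by the
  constant -1/(1+eps).
*)
theory Submission
  imports Defs "HOL-Probability.Probability_Measure"
begin

abbreviation lebesgue01 :: "real measure" where
  "lebesgue01 \<equiv> lebesgue_on {0..1}"

lemma measurable_ident_lebesgue_on [measurable]:
  "(\<lambda>x::real. x) \<in> borel_measurable (lebesgue_on S)"
  by (metis eq_id_iff id_borel_measurable_lebesgue measurable_restrict_space1)

interpretation lebesgue01: prob_space lebesgue01
  by (rule prob_spaceI) (simp add: emeasure_restrict_space)

lemma measure_lebesgue01_unit_interval [simp]: "measure lebesgue01 {0..1} = 1"
  using lebesgue01.prob_space by simp

lemma (in prob_space) square_expectation_le: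
  fixes X :: "'a \<Rightarrow> real"
  assumes "integrable M X" "integrable M (\<lambda>x. (X x)^2)"
  shows "(expectation X)^2 \<le> expectation (\<lambda>x. (X x)^2)"
  using variance_positive[of X] variance_eq[OF assms] by simp

lemma (in prob_space) AE_eq_expectation_if_square_expectation_le:
  fixes X :: "'a \<Rightarrow> real"
  assumes X: "integrable M X" and X2: "integrable M (\<lambda>x. (X x)^2)"
    and le: "expectation (\<lambda>x. (X x)^2) \<le> (expectation X)^2"
  shows "AE x in M. X x = expectation X"
proof -
  have "integrable M (\<lambda>x. (X x - expectation X)^2)"
    using X X2 unfolding power2_eq_square ring_distribs
    by (intro Bochner_Integration.integrable_diff) auto
  moreover have "variance X = 0"
    using variance_positive[of X] variance_eq[OF X X2] le by simp
  ultimately have "AE x in M. (X x - expectation X)^2 = 0"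
    by (subst integral_nonneg_eq_0_iff_AE[symmetric]) auto
  then show ?thesis
    by simp
qed

lemma indicator_lebesgue01:
  assumes "A \<subseteq> {0..1}" "A \<in> sets lebesgue"
  shows "integrable lebesgue01 (indicator A :: real \<Rightarrow> real)"
    and "measure lebesgue01 A = measure lebesgue A"
proof -
  have A: "A \<inter> {0..1} = A"
    using assms by auto
  then have "A \<in> sets lebesgue01"
    using assms by (simp add: sets_restrict_space_iff)
  then show "integrable lebesgue01 (indicator A :: real \<Rightarrow> real)"
    by (simp add: integrable_real_indicator lebesgue01.emeasure_finite less_top[symmetric])
  show "measure lebesgue01 A = measure lebesgue A"
    using assms A by (simp add: measure_restrict_space)
qed

lemma L2adm_integrable: "L2adm u \<Longrightarrow> integrable lebesgue01 u"
  unfolding L2adm_def using lebesgue01.square_integrable_imp_integrable by blast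

lemma L2adm_integrable_square: "L2adm u \<Longrightarrow> integrable lebesgue01 (\<lambda>s. (u s)^2)"
  unfolding L2adm_def by blast

lemma L2adm_square_integral_le:
  "L2adm u \<Longrightarrow> (integral\<^sup>L lebesgue01 u)^2 \<le> integral\<^sup>L lebesgue01 (\<lambda>s. (u s)^2)"
  by (intro lebesgue01.square_expectation_le L2adm_integrable L2adm_integrable_square)

lemma L2adm_const: "L2adm (\<lambda>_. c)"
  unfolding L2adm_def by simp

lemma L2adm_dominated:
  assumes u: "u \<in> borel_measurable lebesgue01" and v: "L2adm v"
    and le: "\<And>s. s \<in> {0..1} \<Longrightarrow> \<bar>u s\<bar> \<le> \<bar>v s\<bar>"
  shows "L2adm u"
  unfolding L2adm_def
proof (intro conjI u Bochner_Integration.integrable_bound[OF L2adm_integrable_square[OF v]])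
  show "(\<lambda>s. (u s)^2) \<in> borel_measurable lebesgue01"
    using u by (rule borel_measurable_power)
  show "AE s in lebesgue01. norm ((u s)^2) \<le> norm ((v s)^2)"
    using le by (intro AE_I2) (simp add: abs_le_square_iff)
qed

lemma L2adm_mult_ident:
  assumes "L2adm u"
  shows "L2adm (\<lambda>s. s * u s)"
proof (rule L2adm_dominated[OF _ assms])
  show "(\<lambda>s. s * u s) \<in> borel_measurable lebesgue01"
    using assms unfolding L2adm_def
    by (intro borel_measurable_times measurable_ident_lebesgue_on) auto
  show "\<bar>s * u s\<bar> \<le> \<bar>u s\<bar>" if "s \<in> {0..1}" for s
    using that by (simp add: abs_mult mult_left_le_one_le)
qed

lemma L2adm_cutoff_inverse:
  assumes "0 < d" "d \<le> 1"
  shows "L2adm (\<lambda>s. c / s * indicator {d..1} s)"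
proof (rule L2adm_dominated[OF _ L2adm_const[of "c / d"]])
  show "(\<lambda>s. c / s * indicator {d..1} s) \<in> borel_measurable lebesgue01"
    by measurable
  show "\<bar>c / s * indicator {d..1} s\<bar> \<le> \<bar>c / d\<bar>" for s
    using assms by (auto simp: indicator_def abs_divide intro!: divide_left_mono)
qed

lemma Jfun_eq:
  assumes "L2adm u1" "L2adm u2"
  shows "Jfun x u1 u2 =
    - ((x + integral\<^sup>L lebesgue01 (\<lambda>s. s * u1 s) + integral\<^sup>L lebesgue01 u2)^2)
    + integral\<^sup>L lebesgue01 (\<lambda>s. (s * u1 s)^2)"
proof -
  have "integral\<^sup>L lebesgue01 (\<lambda>s. s * u1 s + u2 s)
      = integral\<^sup>L lebesgue01 (\<lambda>s. s * u1 s) + integral\<^sup>L lebesgue01 u2"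
    using assms by (simp add: L2adm_integrable L2adm_mult_ident)
  moreover have "(\<lambda>s. s^2 * \<bar>u1 s\<bar>^2) = (\<lambda>s. (s * u1 s)^2)"
    by (simp add: power_mult_distrib)
  ultimately show ?thesis
    unfolding Jfun_def Xstate_def by (simp add: add.assoc)
qed

lemma Jeps_eq:
  assumes "L2adm u1" "L2adm u2"
  shows "Jeps \<epsilon> x u1 u2 =
    - ((x + integral\<^sup>L lebesgue01 (\<lambda>s. s * u1 s) + integral\<^sup>L lebesgue01 u2)^2)
    + integral\<^sup>L lebesgue01 (\<lambda>s. (s * u1 s)^2) - \<epsilon> * integral\<^sup>L lebesgue01 (\<lambda>s. (u2 s)^2)"
  unfolding Jeps_def Jfun_eq[OF assms] by simp

text \<open>On \<open>(0,d]\<close> the control \<open>a = c/s\<close> contributes at least \<open>c\<^sup>2/d\<close> to \<open>\<integral>a\<^sup>2\<close>.\<close>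

lemma L2adm_mult_ident_AE_const_eq_0:
  assumes a: "L2adm a" and ae: "AE s in lebesgue01. s * a s = c"
  shows "c = 0"
proof (rule ccontr)
  assume "c \<noteq> 0"
  define R where "R = integral\<^sup>L lebesgue01 (\<lambda>s. (a s)^2)"
  have bound: "c^2 / d \<le> R" if d: "0 < d" "d \<le> 1" for d
  proof -
    have "AE s in lebesgue01. (c / d)^2 * indicator {0<..d} s \<le> (a s)^2"
      using ae
    proof (rule AE_mp, intro AE_I2 impI)
      fix s assume s: "s * a s = c"
      show "(c / d)^2 * indicator {0<..d} s \<le> (a s)^2"
      proof (cases "s \<in> {0<..d}")
        case True
        then have "a s = c / s"
          using s by (auto simp: field_simps)
        moreover have "s^2 \<le> d^2"
          using True by (simp add: power_mono)
        then have "c^2 / d^2 \<le> c^2 / s^2"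
          using True by (intro divide_left_mono) auto
        ultimately show ?thesis
          using True by (simp add: power_divide)
      qed simp
    qed
    moreover have "{0<..d} \<subseteq> {0..1}"
      using d by auto
    ultimately have "integral\<^sup>L lebesgue01 (\<lambda>s. (c / d)^2 * indicator {0<..d} s) \<le> R"
      unfolding R_def using L2adm_integrable_square[OF a]
      by (intro integral_mono_AE) (auto simp: indicator_lebesgue01)
    moreover have "integral\<^sup>L lebesgue01 (\<lambda>s. (c / d)^2 * indicator {0<..d} s) = c^2 / d"
      using \<open>{0<..d} \<subseteq> {0..1}\<close> d by (simp add: indicator_lebesgue01 Int_absorb2 power2_eq_square)
    ultimately show ?thesis
      by simp
  qed
  have "R \<ge> 0"
    unfolding R_def by simp
  have "0 < c^2"
    using \<open>c \<noteq> 0\<close> by simp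
  moreover from this have "0 < c^2 + R + 1"
    using \<open>R \<ge> 0\<close> by linarith
  ultimately have "c^2 / (c^2 / (c^2 + R + 1)) \<le> R"
    by (intro bound) (use \<open>R \<ge> 0\<close> in \<open>simp_all add: divide_le_eq_1\<close>)
  then have "c^2 + R + 1 \<le> R"
    using \<open>0 < c^2\<close> \<open>0 < c^2 + R + 1\<close> by simp
  then show False
    using \<open>0 < c^2\<close> by linarith
qed

lemma shifted_cost_unbounded_below:
  assumes "K \<noteq> 0"
  obtains u where "L2adm u"
    and "- ((K + integral\<^sup>L lebesgue01 (\<lambda>s. s * u s))^2)
         + integral\<^sup>L lebesgue01 (\<lambda>s. (s * u s)^2) < L"
proof -
  define d where "d = K^2 / (K^2 + \<bar>L\<bar> + 1)"
  have "0 < K^2"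
    using assms by simp
  moreover from this have "0 < K^2 + \<bar>L\<bar> + 1"
    by (simp add: add_pos_nonneg)
  ultimately have d: "0 < d" "d \<le> 1"
    unfolding d_def by (simp_all add: divide_le_eq_1)
  define u where "u = (\<lambda>s. K / d / s * indicator {d..1} s)"
  have su: "(\<lambda>s. s * u s) = (\<lambda>s. K / d * indicator {d..1} s)"
    and su2: "(\<lambda>s. (s * u s)^2) = (\<lambda>s. (K / d)^2 * indicator {d..1} s)"
    using d by (auto simp: u_def indicator_def fun_eq_iff)
  have "- ((K + integral\<^sup>L lebesgue01 (\<lambda>s. s * u s))^2)
        + integral\<^sup>L lebesgue01 (\<lambda>s. (s * u s)^2)
      = - ((K + K / d * (1 - d))^2) + (K / d)^2 * (1 - d)"
    unfolding su su2 using d by (simp add: indicator_lebesgue01 Int_absorb2)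
  also have "\<dots> = - (K^2 / d)"
    using d by (simp add: field_simps power2_eq_square)
  also have "\<dots> = - (K^2 + \<bar>L\<bar> + 1)"
    using \<open>0 < K^2\<close> by (simp add: d_def)
  also have "\<dots> < L"
    using abs_ge_minus_self[of L] \<open>0 < K^2\<close> by linarith
  finally show ?thesis
    using that L2adm_cutoff_inverse[OF d] unfolding u_def by blast
qed

lemma Jeps_player1_improves:
  assumes a: "L2adm a" and b: "L2adm b" and "1 + integral\<^sup>L lebesgue01 b \<noteq> 0"
  obtains u where "L2adm u" and "Jeps \<epsilon> 1 u b < Jeps \<epsilon> 1 a b"
proof -
  define A where "A = integral\<^sup>L lebesgue01 (\<lambda>s. s * a s)"
  define B where "B = integral\<^sup>L lebesgue01 b"
  define S where "S = integral\<^sup>L lebesgue01 (\<lambda>s. (s * a s)^2)"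
  obtain u where u: "L2adm u"
    and "- ((1 + B + integral\<^sup>L lebesgue01 (\<lambda>s. s * u s))^2)
         + integral\<^sup>L lebesgue01 (\<lambda>s. (s * u s)^2) < - ((1 + A + B)^2) + S"
    using shifted_cost_unbounded_below assms(3) unfolding B_def by blast
  then have "Jeps \<epsilon> 1 u b < Jeps \<epsilon> 1 a b"
    unfolding Jeps_eq[OF u b] Jeps_eq[OF a b] A_def[symmetric] B_def[symmetric] S_def[symmetric]
    by (simp add: add_ac)
  with u show ?thesis
    by (rule that)
qed

lemma Jeps_player1_optimal_imp_mean_eq_0:
  assumes a: "L2adm a" and b: "L2adm b" and "1 + integral\<^sup>L lebesgue01 b = 0"
    and "Jeps \<epsilon> 1 a b \<le> Jeps \<epsilon> 1 (\<lambda>_. 0) b"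
  shows "integral\<^sup>L lebesgue01 (\<lambda>s. s * a s) = 0"
proof -
  define A where "A = integral\<^sup>L lebesgue01 (\<lambda>s. s * a s)"
  have "1 + A + integral\<^sup>L lebesgue01 b = A"
    using assms(3) by simp
  with assms(4) have "integral\<^sup>L lebesgue01 (\<lambda>s. (s * a s)^2) \<le> A^2"
    unfolding Jeps_eq[OF a b] Jeps_eq[OF L2adm_const b] A_def[symmetric]
    using assms(3) by (simp add: add.assoc[symmetric])
  then have "AE s in lebesgue01. s * a s = A"
    unfolding A_def using L2adm_mult_ident[OF a]
    by (intro lebesgue01.AE_eq_expectation_if_square_expectation_le)
      (auto simp: L2adm_integrable L2adm_integrable_square)
  then show ?thesis
    unfolding A_def[symmetric] by (rule L2adm_mult_ident_AE_const_eq_0[OF a])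
qed

text \<open>The constant \<open>-1/(1+\<epsilon>)\<close> maximises \<open>c \<mapsto> -(1+c)\<^sup>2 - \<epsilon>c\<^sup>2\<close>.\<close>

lemma Jeps_player2_improves:
  assumes "\<epsilon> > 0" and a: "L2adm a" and b: "L2adm b"
    and A: "integral\<^sup>L lebesgue01 (\<lambda>s. s * a s) = 0" and B: "1 + integral\<^sup>L lebesgue01 b = 0"
  shows "Jeps \<epsilon> 1 a b < Jeps \<epsilon> 1 a (\<lambda>_. - 1 / (1 + \<epsilon>))"
proof -
  define c where "c = - 1 / (1 + \<epsilon>)"
  define S where "S = integral\<^sup>L lebesgue01 (\<lambda>s. (s * a s)^2)"
  define Q where "Q = integral\<^sup>L lebesgue01 (\<lambda>s. (b s)^2)"
  have c: "(1 + \<epsilon>) * c = -1" "1 + c = - (\<epsilon> * c)"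
    using assms(1) by (simp_all add: c_def field_simps)
  have "(1 + c)^2 + \<epsilon> * c^2 = \<epsilon> * c * ((1 + \<epsilon>) * c)"
    unfolding c(2) by (simp add: power2_eq_square algebra_simps)
  then have square_sum: "(1 + c)^2 + \<epsilon> * c^2 = - (\<epsilon> * c)"
    unfolding c(1) by simp
  have "Q \<ge> 1"
    using L2adm_square_integral_le[OF b] B
    unfolding Q_def[symmetric] by (simp add: eq_neg_iff_add_eq_0[symmetric])
  have "Jeps \<epsilon> 1 a b = S - \<epsilon> * Q"
    unfolding Jeps_eq[OF a b] S_def Q_def using A B by (simp add: add.assoc)
  also have "\<dots> \<le> S - \<epsilon>"
    using \<open>Q \<ge> 1\<close> assms(1) by simp
  also have "\<dots> < S + \<epsilon> * c"
    using assms(1) by (simp add: c_def field_simps)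
  also have "\<dots> = - ((1 + c)^2) + S - \<epsilon> * c^2"
    using square_sum by linarith
  also have "\<dots> = Jeps \<epsilon> 1 a (\<lambda>_. c)"
    unfolding Jeps_eq[OF a L2adm_const] S_def A by simp
  finally show ?thesis
    unfolding c_def .
qed

lemma Jeps_no_open_loop_saddle:
  assumes "\<epsilon> > 0"
  shows "\<not> open_loop_saddle (Jeps \<epsilon>) 1 a b"
proof
  assume "open_loop_saddle (Jeps \<epsilon>) 1 a b"
  then have a: "L2adm a" and b: "L2adm b"
    and max2: "\<And>u2. L2adm u2 \<Longrightarrow> Jeps \<epsilon> 1 a u2 \<le> Jeps \<epsilon> 1 a b"
    and min1: "\<And>u1. L2adm u1 \<Longrightarrow> Jeps \<epsilon> 1 a b \<le> Jeps \<epsilon> 1 u1 b"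
    unfolding open_loop_saddle_def by blast+
  have B: "1 + integral\<^sup>L lebesgue01 b = 0"
  proof (rule ccontr)
    assume "1 + integral\<^sup>L lebesgue01 b \<noteq> 0"
    then obtain u where "L2adm u" "Jeps \<epsilon> 1 u b < Jeps \<epsilon> 1 a b"
      by (rule Jeps_player1_improves[OF a b])
    with min1 show False
      by (simp add: not_le[symmetric])
  qed
  have "integral\<^sup>L lebesgue01 (\<lambda>s. s * a s) = 0"
    by (rule Jeps_player1_optimal_imp_mean_eq_0[OF a b B min1[OF L2adm_const]])
  then have "Jeps \<epsilon> 1 a b < Jeps \<epsilon> 1 a (\<lambda>_. - 1 / (1 + \<epsilon>))"
    by (rule Jeps_player2_improves[OF assms a b _ B])
  with max2[OF L2adm_const] show False
    by (simp add: not_le[symmetric])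
qed

theorem mainTheorem10:
  shows "(\<forall>u1. L2adm u1 \<longrightarrow> Jfun 0 u1 (\<lambda>_. 0) \<ge> 0)
       \<and> (\<forall>u2. L2adm u2 \<longrightarrow> Jfun 0 (\<lambda>_. 0) u2 \<le> 0)
       \<and> open_loop_saddle Jfun 1 (\<lambda>_. 0) (\<lambda>_. -1)
       \<and> (\<forall>\<epsilon>>0. \<not> (\<exists>a b. open_loop_saddle (Jeps \<epsilon>) 1 a b))"
proof (intro conjI allI impI)
  have player1_cost_nonneg: "Jfun x u1 (\<lambda>_. - x) \<ge> 0" if u1: "L2adm u1" for x u1
    using L2adm_square_integral_le[OF L2adm_mult_ident[OF u1]]
    unfolding Jfun_eq[OF u1 L2adm_const] by simp
  have player2_payoff_nonpos: "Jfun x (\<lambda>_. 0) u2 \<le> 0" if "L2adm u2" for x u2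
    unfolding Jfun_eq[OF L2adm_const that] by simp
  show "Jfun 0 u1 (\<lambda>_. 0) \<ge> 0" if "L2adm u1" for u1
    using player1_cost_nonneg[OF that, of 0] by simp
  show "Jfun 0 (\<lambda>_. 0) u2 \<le> 0" if "L2adm u2" for u2
    using player2_payoff_nonpos[OF that] .
  have "Jfun 1 (\<lambda>_. 0) (\<lambda>_. -1) = 0"
    unfolding Jfun_eq[OF L2adm_const L2adm_const] by simp
  then show "open_loop_saddle Jfun 1 (\<lambda>_. 0) (\<lambda>_. -1)"
    unfolding open_loop_saddle_def
    using player1_cost_nonneg[of _ 1] player2_payoff_nonpos[of _ 1] by (simp add: L2adm_const)
  show "\<not> (\<exists>a b. open_loop_saddle (Jeps \<epsilon>) 1 a b)" if "\<epsilon> > 0" for \<epsilon>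
    using Jeps_no_open_loop_saddle[OF that] by blast
qed

end
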